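(* Let $B$ be a unital commutative semi-simple Banach algebra whose maximal ideal space $X$ is connected, and let $T$ be a unital endomorphism of $B$ which is a Riesz operator, induced by the selfmap $\phi$ of $X$. Then $\bigcap_{n=0}^\infty \phi_n(X)=\{x_0\}$ for some $x_0\in X$, and $x_0$ is the unique fixed point of $\phi$.
   Context: The maximal ideal space $X$ of $B$ carries the weak-* (Gelfand) topology, and $\hat f$ denotes the Gelfand transform of $f\in B$. A unital endomorphism $T$ of $B$ (linear, multiplicative, $T1=1$) is said to be induced by a selfmap $\phi$ of $X$ if $\phi$ is weak-* continuous and $\widehat{Tf}(x)=\hat f(\phi(x))$ for all $f\in B$, $x\in X$. $\phi_n$ denotes the $n$-th iterate of $\phi$, with $\phi_0$ the identity. A bounded linear operator $T$ on a Banach space is a Riesz operator if $\lim_{n\to\infty}\left[\inf\{\|T^n-K\|: K \text{ compact}\}\right]^{1/n}=0$ (equivalently, $\lambda-T$ is Fredholm of index zero with finite ascent and descent for every nonzero $\lambda$, and the nonzero spectrum consists of eigenvalues accumulating at most at $0$). *)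

theory Defs
  imports "HOL-Analysis.Analysis"
begin

class comm_cbanach_algebra_1 = comm_ring_1 + real_normed_algebra_1 + banach +
  fixes scaleC :: "complex \<Rightarrow> 'a \<Rightarrow> 'a"
  assumes scaleC_of_real: "scaleC (complex_of_real r) x = scaleR r x"
    and scaleC_add_left: "scaleC (a + b) x = scaleC a x + scaleC b x"
    and scaleC_add_right: "scaleC a (x + y) = scaleC a x + scaleC a y"
    and scaleC_scaleC: "scaleC a (scaleC b x) = scaleC (a * b) x"
    and scaleC_one: "scaleC 1 x = x"
    and norm_scaleC: "norm (scaleC a x) = cmod a * norm x"
    and scaleC_mult_left: "scaleC a (x * y) = scaleC a x * y"

definition clinear :: "('a::comm_cbanach_algebra_1 \<Rightarrow> 'b::comm_cbanach_algebra_1) \<Rightarrow> bool" where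
  "clinear T \<longleftrightarrow> (\<forall>x y. T (x + y) = T x + T y) \<and> (\<forall>c x. T (scaleC c x) = scaleC c (T x))"

definition character :: "('a::comm_cbanach_algebra_1 \<Rightarrow> complex) \<Rightarrow> bool" where
  "character h \<longleftrightarrow> (\<forall>x y. h (x + y) = h x + h y) \<and> (\<forall>c x. h (scaleC c x) = c * h x)
     \<and> (\<forall>x y. h (x * y) = h x * h y) \<and> h 1 = 1"

text \<open>The maximal ideal space, realised as the set of characters; as a subset of
the function space 'a \<Rightarrow> complex with the product topology it carries exactly the
weak-* (Gelfand) topology. The Gelfand transform of f is \<lambda>x. x f.\<close>
definition max_ideal_space :: "('a::comm_cbanach_algebra_1 \<Rightarrow> complex) set" where
  "max_ideal_space = {h. character h}"

text \<open>Semi-simple: the Gelfand transform is injective (the radical, i.e. the intersection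
of all maximal ideals = kernels of characters, is zero).\<close>
definition semisimple :: "'a::comm_cbanach_algebra_1 itself \<Rightarrow> bool" where
  "semisimple _ \<longleftrightarrow> (\<forall>f::'a. (\<forall>x\<in>max_ideal_space. x f = 0) \<longrightarrow> f = 0)"

definition unital_endomorphism :: "('a::comm_cbanach_algebra_1 \<Rightarrow> 'a) \<Rightarrow> bool" where
  "unital_endomorphism T \<longleftrightarrow> clinear T \<and> (\<forall>x y. T (x * y) = T x * T y) \<and> T 1 = 1"

definition induced_by :: "('a::comm_cbanach_algebra_1 \<Rightarrow> 'a) \<Rightarrow>
    (('a \<Rightarrow> complex) \<Rightarrow> ('a \<Rightarrow> complex)) \<Rightarrow> bool" where
  "induced_by T \<phi> \<longleftrightarrow> \<phi> ` max_ideal_space \<subseteq> max_ideal_space \<and>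
     continuous_on max_ideal_space \<phi> \<and>
     (\<forall>f. \<forall>x\<in>max_ideal_space. x (T f) = (\<phi> x) f)"

definition bounded_operator :: "('a::comm_cbanach_algebra_1 \<Rightarrow> 'a) \<Rightarrow> bool" where
  "bounded_operator T \<longleftrightarrow> clinear T \<and> bounded_linear T"

definition compact_operator :: "('a::comm_cbanach_algebra_1 \<Rightarrow> 'a) \<Rightarrow> bool" where
  "compact_operator K \<longleftrightarrow> clinear K \<and> compact (closure (K ` cball 0 1))"

definition ess_norm :: "('a::comm_cbanach_algebra_1 \<Rightarrow> 'a) \<Rightarrow> real" where
  "ess_norm S = Inf {onorm (\<lambda>x. S x - K x) | K. compact_operator K}"

definition riesz_operator :: "('a::comm_cbanach_algebra_1 \<Rightarrow> 'a) \<Rightarrow> bool" where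
  "riesz_operator T \<longleftrightarrow> bounded_operator T \<and>
     ((\<lambda>n. root n (ess_norm (T ^^ n))) \<longlonglongrightarrow> 0)"

end

theory Submission
  imports Defs
begin

text \<open>The sets \<open>\<phi>\<^sub>n(X)\<close> form a decreasing sequence of compact connected sets, so their
  intersection \<open>K\<close> is nonempty, compact and connected, and every \<open>\<phi>\<^sub>m\<close> maps \<open>K\<close> onto itself.
  Since \<open>T\<close> is induced by \<open>\<phi>\<close>, each \<open>k \<in> K\<close> is of the form \<open>k' \<circ> T\<^sup>m\<close> with \<open>k' \<in> K\<close>.
  As \<open>T\<close> is Riesz, some power \<open>T\<^sup>m\<close> is within \<open>1/8\<close> of a compact operator, hence maps the
  unit ball into the \<open>1/4\<close>-neighbourhood of a finite set of \<open>d\<close> points of norm at most \<open>A\<close>.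
  Consider the determinants \<open>det (k\<^sub>i g\<^sub>j)\<close> of size \<open>N\<close> with \<open>k\<^sub>i \<in> K\<close> and \<open>g\<^sub>j\<close> in the unit
  ball. Lifting the \<open>k\<^sub>i\<close> through \<open>T\<^sup>m\<close> and splitting each \<open>T\<^sup>m g\<^sub>j\<close> into a point of the
  net plus a remainder of norm at most \<open>1/4\<close>, multilinearity bounds their supremum \<open>D\<close> by
  \<open>(4A)\<^sup>d / 2\<^sup>N \<cdot> D\<close>: terms using more than \<open>d\<close> net points have two equal columns. So all these
  determinants vanish for large \<open>N\<close>, whereas \<open>N\<close> distinct characters admit \<open>g\<^sub>j\<close> with
  \<open>k\<^sub>i g\<^sub>j = \<delta>\<^sub>i\<^sub>j\<close> up to scaling. Hence \<open>K\<close> is finite, and being connected it is a single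
  point, which is fixed by \<open>\<phi>\<close> and contains every fixed point.\<close>

section \<open>Iterated images of a continuous self-map\<close>

text \<open>Hausdorffness is assumed of the topology rather than through the class \<open>t2_space\<close>: the
  product topology on \<open>'a \<Rightarrow> complex\<close>, which carries the maximal ideal space, has no such
  class instance.\<close>

lemma Hausdorff_space_euclidean_fun:
  "Hausdorff_space (euclidean :: ('a \<Rightarrow> 'b::metric_space) topology)"
  by (metis Hausdorff_space_euclidean Hausdorff_space_product_topology euclidean_product_topology)

context
  assumes Hausdorff: "Hausdorff_space (euclidean :: 'a::topological_space topology)"
begin

lemma Hausdorff_compact_imp_closed:
  fixes S :: "'a set"
  shows "compact S \<Longrightarrow> closed S"
  using compactin_imp_closedin[OF Hausdorff] by simp

lemma decseq_compact_Inter_subset_open: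
  fixes S :: "nat \<Rightarrow> 'a set"
  assumes compact: "\<And>n. compact (S n)" and "decseq S" and "open U" and "(\<Inter>n. S n) \<subseteq> U"
  shows "\<exists>n. S n \<subseteq> U"
proof (rule ccontr)
  assume none: "\<nexists>n. S n \<subseteq> U"
  have "(S 0 - U) \<inter> (\<Inter>n. S n) \<noteq> {}"
  proof (rule compact_imp_fip_image)
    show "compact (S 0 - U)"
      using compact \<open>open U\<close> by (simp add: Diff_eq compact_Int_closed closed_Compl)
    show "closed (S n)" for n
      by (simp add: compact Hausdorff_compact_imp_closed)
    fix I :: "nat set" assume "finite I"
    then have "S (Max (insert 0 I)) \<subseteq> S i" if "i \<in> insert 0 I" for i
      using \<open>decseq S\<close> that by (simp add: decseq_def)
    then have "S (Max (insert 0 I)) \<subseteq> S 0 \<inter> (\<Inter>i\<in>I. S i)"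
      by blast
    with none show "(S 0 - U) \<inter> (\<Inter>i\<in>I. S i) \<noteq> {}"
      by blast
  qed
  with \<open>(\<Inter>n. S n) \<subseteq> U\<close> show False
    by blast
qed

lemma connected_decseq_compact_Inter:
  fixes S :: "nat \<Rightarrow> 'a set"
  assumes compact: "\<And>n. compact (S n)" and connected: "\<And>n. connected (S n)" and "decseq S"
  shows "connected (\<Inter>n. S n)"
  unfolding connected_closed
proof clarify
  fix A B
  assume "closed A" "closed B" and cover: "(\<Inter>n. S n) \<subseteq> A \<union> B"
    and disj: "A \<inter> B \<inter> (\<Inter>n. S n) = {}"
    and meets: "A \<inter> (\<Inter>n. S n) \<noteq> {}" "B \<inter> (\<Inter>n. S n) \<noteq> {}"
  have "closed (\<Inter>n. S n)"
    by (simp add: closed_INT compact Hausdorff_compact_imp_closed)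
  with compact[of 0] have "compact (S 0 \<inter> (\<Inter>n. S n))"
    by (rule compact_Int_closed)
  then have "compact (\<Inter>n. S n)"
    by (metis INT_lower Int_absorb1 UNIV_I)
  then have "compactin euclidean (A \<inter> (\<Inter>n. S n))" "compactin euclidean (B \<inter> (\<Inter>n. S n))"
    using \<open>closed A\<close> \<open>closed B\<close> by auto
  moreover have "disjnt (A \<inter> (\<Inter>n. S n)) (B \<inter> (\<Inter>n. S n))"
    using disj by (auto simp: disjnt_def)
  ultimately obtain U V where "open U" "open V" "U \<inter> V = {}"
    and AU: "A \<inter> (\<Inter>n. S n) \<subseteq> U" and BV: "B \<inter> (\<Inter>n. S n) \<subseteq> V"
    using Hausdorff_space_compact_separation[OF Hausdorff] by (metis disjnt_def open_openin)
  moreover have "(\<Inter>n. S n) \<subseteq> U \<union> V"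
    using cover AU BV by blast
  then obtain n where "S n \<subseteq> U \<union> V"
    using decseq_compact_Inter_subset_open[OF compact \<open>decseq S\<close>] \<open>open U\<close> \<open>open V\<close>
    by blast
  moreover have "U \<inter> S n \<noteq> {}" "V \<inter> S n \<noteq> {}"
    using meets AU BV by blast+
  ultimately show False
    using connectedD[OF connected[of n]] by blast
qed

lemma connected_finite_imp_sing:
  fixes S :: "'a set"
  assumes "connected S" "finite S" "S \<noteq> {}"
  obtains a where "S = {a}"
proof -
  obtain a where "a \<in> S"
    using \<open>S \<noteq> {}\<close> by blast
  have "closed {a}" "closed (S - {a})"
    using \<open>finite S\<close> by (simp_all add: finite_imp_compact Hausdorff_compact_imp_closed)
  moreover have "S \<subseteq> {a} \<union> (S - {a})" "{a} \<inter> (S - {a}) \<inter> S = {}" "{a} \<inter> S \<noteq> {}"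
    using \<open>a \<in> S\<close> by auto
  ultimately have "(S - {a}) \<inter> S = {}"
    using \<open>connected S\<close> unfolding connected_closed by meson
  with \<open>a \<in> S\<close> show thesis
    using that by blast
qed

end

definition eventual_image :: "('a \<Rightarrow> 'a) \<Rightarrow> 'a set \<Rightarrow> 'a set" where
  "eventual_image f X = (\<Inter>n. (f ^^ n) ` X)"

lemma eventual_image_subset: "eventual_image f X \<subseteq> X"
proof -
  have "eventual_image f X \<subseteq> (f ^^ 0) ` X"
    unfolding eventual_image_def by (rule INT_lower) simp
  then show ?thesis
    by simp
qed

lemma fixed_point_in_eventual_image:
  assumes "x \<in> X" "f x = x"
  shows "x \<in> eventual_image f X"
proof -
  have "(f ^^ n) x = x" for n
    by (induction n) (simp_all add: \<open>f x = x\<close>)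
  then have "x \<in> (f ^^ n) ` X" for n
    using \<open>x \<in> X\<close> by (metis image_eqI)
  then show ?thesis
    unfolding eventual_image_def by blast
qed

lemma funpow_image_subset:
  assumes "f ` X \<subseteq> X"
  shows "(f ^^ n) ` X \<subseteq> X"
proof (induction n)
  case (Suc n)
  have "(f ^^ Suc n) ` X = f ` (f ^^ n) ` X"
    by (simp only: funpow.simps image_comp)
  with Suc assms show ?case
    by (metis image_mono order_trans)
qed simp

lemma decseq_funpow_image:
  assumes "f ` X \<subseteq> X"
  shows "decseq (\<lambda>n. (f ^^ n) ` X)"
proof (rule decseq_SucI)
  fix n
  have "(f ^^ Suc n) ` X = (f ^^ n) ` f ` X"
    by (simp only: funpow_Suc_right image_comp)
  with assms show "(f ^^ Suc n) ` X \<subseteq> (f ^^ n) ` X"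
    by (simp add: image_mono)
qed

lemma continuous_on_funpow:
  assumes "continuous_on X f" "f ` X \<subseteq> X"
  shows "continuous_on X (f ^^ n)"
proof (induction n)
  case (Suc n)
  have "continuous_on X (f \<circ> f ^^ n)"
    using Suc continuous_on_subset[OF assms(1) funpow_image_subset[OF assms(2)]]
    by (rule continuous_on_compose)
  then show ?case
    by (simp only: funpow.simps)
qed simp

context
  fixes f :: "'a::topological_space \<Rightarrow> 'a" and X :: "'a set"
  assumes Hausdorff: "Hausdorff_space (euclidean :: 'a topology)"
    and "compact X" and continuous: "continuous_on X f" and maps: "f ` X \<subseteq> X"
begin

lemma compact_funpow_image: "compact ((f ^^ n) ` X)"
  using \<open>compact X\<close> continuous_on_funpow[OF continuous maps]
  by (rule compact_continuous_image[rotated])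

lemma eventual_image_nonempty:
  assumes "X \<noteq> {}"
  shows "eventual_image f X \<noteq> {}"
proof
  assume "eventual_image f X = {}"
  then obtain n where "(f ^^ n) ` X \<subseteq> {}"
    using decseq_compact_Inter_subset_open[OF Hausdorff compact_funpow_image decseq_funpow_image[OF maps]]
    unfolding eventual_image_def by blast
  with assms show False
    by blast
qed

lemma connected_eventual_image:
  assumes "connected X"
  shows "connected (eventual_image f X)"
  unfolding eventual_image_def
proof (rule connected_decseq_compact_Inter[OF Hausdorff compact_funpow_image _ decseq_funpow_image[OF maps]])
  show "connected ((f ^^ n) ` X)" for n
    using assms continuous_on_funpow[OF continuous maps] by (rule connected_continuous_image[rotated])
qed

lemma funpow_image_eventual_image: "(f ^^ m) ` eventual_image f X = eventual_image f X"
proof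
  have "(f ^^ m) ` (f ^^ n) ` X \<subseteq> (f ^^ n) ` X" for n
    using decseq_funpow_image[OF maps, THEN decseqD, of n "m + n"]
    by (simp add: funpow_add image_comp)
  then show "(f ^^ m) ` eventual_image f X \<subseteq> eventual_image f X"
    unfolding eventual_image_def by blast
next
  show "eventual_image f X \<subseteq> (f ^^ m) ` eventual_image f X"
  proof
    fix y assume y: "y \<in> eventual_image f X"
    txt \<open>Cantor's intersection theorem for the compact fibres of \<open>f ^^ m\<close> over \<open>y\<close> inside the
      sets \<open>(f ^^ n) ` X\<close>.\<close>
    define F where "F n = (f ^^ n) ` X \<inter> (X \<inter> (f ^^ m) -` {y})" for n
    have "closed (X \<inter> (f ^^ m) -` {y})"
      using continuous_on_funpow[OF continuous maps] \<open>compact X\<close>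
      by (intro continuous_closed_preimage) (simp_all add: Hausdorff_compact_imp_closed[OF Hausdorff])
    then have "compact (F n)" for n
      unfolding F_def by (intro compact_Int_closed compact_funpow_image)
    moreover have "decseq F"
      using decseq_funpow_image[OF maps] unfolding F_def decseq_def by blast
    moreover have "F n \<noteq> {}" for n
    proof -
      from y obtain z where "z \<in> X" "y = (f ^^ (m + n)) z"
        unfolding eventual_image_def by blast
      then have "(f ^^ n) z \<in> F n"
        using funpow_image_subset[OF maps] by (auto simp: F_def funpow_add)
      then show ?thesis
        by blast
    qed
    ultimately obtain x where "x \<in> (\<Inter>n. F n)"
      using decseq_compact_Inter_subset_open[OF Hausdorff, of F "{}"] by blast
    then show "y \<in> (f ^^ m) ` eventual_image f X"
      unfolding F_def eventual_image_def by blast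
  qed
qed

lemma eventual_image_singleton_fixed_point:
  assumes "eventual_image f X = {x0}"
  shows "x0 \<in> X" "f x0 = x0" "\<And>x. x \<in> X \<Longrightarrow> f x = x \<Longrightarrow> x = x0"
proof -
  show "x0 \<in> X"
    using eventual_image_subset[of f X] assms by simp
  show "f x0 = x0"
    using funpow_image_eventual_image[of 1] assms by simp
  show "x = x0" if "x \<in> X" "f x = x" for x
    using fixed_point_in_eventual_image[of x X f] that assms by simp
qed

end

section \<open>Characters and the maximal ideal space\<close>

lemma character_add: "character h \<Longrightarrow> h (x + y) = h x + h y"
  and character_scaleC: "character h \<Longrightarrow> h (scaleC c x) = c * h x"
  and character_mult: "character h \<Longrightarrow> h (x * y) = h x * h y"
  and character_one: "character h \<Longrightarrow> h 1 = 1"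
  by (simp_all add: character_def)

lemma character_diff: "character h \<Longrightarrow> h (x - y) = h x - h y"
  using character_add[of h y "x - y"] by simp

lemma character_prod:
  assumes "character h" "finite P"
  shows "h (\<Prod>p\<in>P. e p) = (\<Prod>p\<in>P. h (e p))"
  using \<open>finite P\<close> by induction (simp_all add: assms(1) character_one character_mult)

lemma one_minus_right_invertible:
  fixes x :: "'a::{real_normed_algebra_1, banach}"
  assumes "norm x < 1"
  shows "\<exists>s. (1 - x) * s = 1"
proof -
  have summable: "summable (\<lambda>n. x ^ n)"
    using assms by (rule complete_algebra_summable_geometric)
  define s where "s = (\<Sum>n. x ^ n)"
  have "(\<lambda>n. x ^ Suc n) sums (s - 1)"
    using summable unfolding s_def sums_Suc_iff[of "\<lambda>n. x ^ n"] by (simp add: summable_sums)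
  moreover have "(\<lambda>n. x * x ^ n) sums (x * s)"
    using summable unfolding s_def by (intro sums_mult summable_sums)
  ultimately have "x * s = s - 1"
    by (simp add: sums_unique2)
  then have "(1 - x) * s = 1"
    by (simp add: algebra_simps)
  then show ?thesis
    by blast
qed

lemma norm_character_le:
  fixes h :: "'a::comm_cbanach_algebra_1 \<Rightarrow> complex"
  assumes h: "character h"
  shows "norm (h f) \<le> norm f"
proof (rule ccontr)
  assume "\<not> norm (h f) \<le> norm f"
  then have less: "norm f < norm (h f)" and "h f \<noteq> 0"
    by auto
  define x where "x = scaleC (1 / h f) f"
  have "norm x < 1"
    using less by (simp add: x_def norm_scaleC norm_divide divide_less_eq)
  then obtain s where s: "(1 - x) * s = 1"
    using one_minus_right_invertible by blast
  have "h (1 - x) = 0"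
    using h \<open>h f \<noteq> 0\<close> by (simp add: x_def character_diff character_one character_scaleC)
  then have "h ((1 - x) * s) = 0"
    using h by (simp add: character_mult)
  with s h show False
    by (simp add: character_one)
qed

lemma closed_max_ideal_space: "closed (max_ideal_space :: ('a::comm_cbanach_algebra_1 \<Rightarrow> complex) set)"
proof -
  have "(max_ideal_space :: ('a \<Rightarrow> complex) set) =
     (\<Inter>p. {h. h (fst p + snd p) = h (fst p) + h (snd p)}) \<inter>
     (\<Inter>p. {h. h (scaleC (fst p) (snd p)) = fst p * h (snd p)}) \<inter>
     (\<Inter>p. {h. h (fst p * snd p) = h (fst p) * h (snd p)}) \<inter> {h. h 1 = 1}"
    by (auto simp: max_ideal_space_def character_def)
  also have "closed \<dots>"
    by (intro closed_Int closed_INT ballI closed_Collect_eq continuous_intros) auto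
  finally show ?thesis .
qed

lemma compact_max_ideal_space: "compact (max_ideal_space :: ('a::comm_cbanach_algebra_1 \<Rightarrow> complex) set)"
proof -
  define P where "P = (\<Pi>\<^sub>E f\<in>(UNIV::'a set). cball (0::complex) (norm f))"
  have "compactin (product_topology (\<lambda>f. euclidean) UNIV) P"
    unfolding P_def by (simp add: compactin_PiE)
  then have "compact P"
    by (simp add: euclidean_product_topology)
  then have "compact (P \<inter> max_ideal_space)"
    using closed_max_ideal_space by (rule compact_Int_closed)
  moreover have "max_ideal_space \<subseteq> P"
    by (auto simp: P_def max_ideal_space_def norm_character_le)
  ultimately show ?thesis
    by (simp add: Int_absorb1)
qed

lemma max_ideal_space_nonempty:
  assumes "semisimple TYPE('a::comm_cbanach_algebra_1)"
  shows "(max_ideal_space :: ('a \<Rightarrow> complex) set) \<noteq> {}"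
proof
  assume "(max_ideal_space :: ('a \<Rightarrow> complex) set) = {}"
  then have "(1::'a) = 0"
    using assms unfolding semisimple_def by blast
  then show False
    by simp
qed

lemma character_interpolation:
  fixes a :: "'a::comm_cbanach_algebra_1 \<Rightarrow> complex"
  assumes "finite P" "P \<subseteq> max_ideal_space" "a \<in> max_ideal_space" "a \<notin> P"
  obtains e where "a e = 1" "\<And>k. k \<in> P \<Longrightarrow> k e = 0"
proof -
  have a: "character a"
    using assms(3) by (simp add: max_ideal_space_def)
  have "\<exists>e. a e = 1 \<and> k e = 0" if "k \<in> P" for k
  proof -
    have k: "character k"
      using that assms(2) by (auto simp: max_ideal_space_def)
    from that assms(4) have "a \<noteq> k"
      by blast
    then obtain f where f: "a f \<noteq> k f"
      by (auto simp: fun_eq_iff)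
    define e where "e = scaleC (1 / (a f - k f)) (f - scaleC (k f) 1)"
    have "a e = 1" "k e = 0"
      using a k f by (simp_all add: e_def character_scaleC character_diff character_one)
    then show ?thesis
      by blast
  qed
  then obtain e where e: "\<And>k. k \<in> P \<Longrightarrow> a (e k) = 1 \<and> k (e k) = 0"
    by metis
  show thesis
  proof
    show "a (\<Prod>k\<in>P. e k) = 1"
      using e by (simp add: character_prod[OF a \<open>finite P\<close>])
    fix k assume "k \<in> P"
    then have "character k"
      using assms(2) by (auto simp: max_ideal_space_def)
    with \<open>k \<in> P\<close> e \<open>finite P\<close> show "k (\<Prod>k\<in>P. e k) = 0"
      by (simp add: character_prod prod_zero_iff) (use e in blast)
  qed
qed

lemma character_dual_family:
  fixes k :: "nat \<Rightarrow> 'a::comm_cbanach_algebra_1 \<Rightarrow> complex"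
  assumes "inj_on k {..<N}" "\<And>i. i < N \<Longrightarrow> k i \<in> max_ideal_space"
  obtains e where "\<And>i j. i < N \<Longrightarrow> j < N \<Longrightarrow> k i (e j) = (if i = j then 1 else 0)"
proof -
  have "\<exists>e. \<forall>i<N. k i e = (if i = j then 1 else 0)" if "j < N" for j
  proof -
    have "finite (k ` ({..<N} - {j}))" "k ` ({..<N} - {j}) \<subseteq> max_ideal_space"
      "k j \<in> max_ideal_space" "k j \<notin> k ` ({..<N} - {j})"
      using assms that by (auto simp: inj_on_def)
    then obtain e where "k j e = 1" "\<And>q. q \<in> k ` ({..<N} - {j}) \<Longrightarrow> q e = 0"
      by (rule character_interpolation) auto
    then show ?thesis
      by auto
  qed
  then have "\<forall>j. \<exists>e. j < N \<longrightarrow> (\<forall>i<N. k i e = (if i = j then 1 else 0))"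
    by blast
  then obtain e where e: "\<And>j. j < N \<Longrightarrow> \<forall>i<N. k i (e j) = (if i = j then 1 else 0)"
    by metis
  show thesis
  proof (rule that)
    fix i j assume "i < N" "j < N"
    then show "k i (e j) = (if i = j then 1 else 0)"
      using e by blast
  qed
qed

section \<open>Compact and Riesz operators\<close>

lemma clinear_add: "clinear K \<Longrightarrow> K (x + y) = K x + K y"
  by (simp add: clinear_def)

lemma clinear_scaleR: "clinear K \<Longrightarrow> K (scaleR r x) = scaleR r (K x)"
  by (metis clinear_def scaleC_of_real)

lemma compact_operator_bounded_linear:
  fixes K :: "'a::comm_cbanach_algebra_1 \<Rightarrow> 'a"
  assumes "compact_operator K"
  shows "bounded_linear K"
proof -
  have linear: "clinear K"
    using assms by (simp add: compact_operator_def)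
  have "bounded (closure (K ` cball 0 1))"
    using assms by (simp add: compact_operator_def compact_imp_bounded)
  then have "bounded (K ` cball 0 1)"
    using bounded_subset closure_subset by blast
  then obtain B where "\<forall>y\<in>K ` cball 0 1. norm y \<le> B"
    unfolding bounded_iff by blast
  then have B: "\<And>x. norm x \<le> 1 \<Longrightarrow> norm (K x) \<le> B"
    by simp
  show ?thesis
  proof (rule bounded_linear_intro[where K = B])
    fix x :: 'a
    show "norm (K x) \<le> norm x * B"
    proof (cases "x = 0")
      case True
      then show ?thesis
        using clinear_add[OF linear, of 0 0] by simp
    next
      case False
      then have "K x = scaleR (norm x) (K (scaleR (1 / norm x) x))"
        by (simp add: clinear_scaleR[OF linear, symmetric])
      then show ?thesis
        using B[of "scaleR (1 / norm x) x"] False by (simp add: mult_left_mono)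
    qed
  qed (simp_all add: clinear_add[OF linear] clinear_scaleR[OF linear])
qed

lemma compact_operator_zero: "compact_operator (\<lambda>x::'a::comm_cbanach_algebra_1. 0)"
proof -
  have "scaleC c (0::'a) = 0" for c
    using scaleC_add_right[of c "0::'a" 0] by simp
  moreover have "compact (closure ((\<lambda>x::'a. 0::'a) ` cball 0 1))"
    by (simp add: image_constant_conv closure_closed)
  ultimately show ?thesis
    unfolding compact_operator_def clinear_def by simp
qed

lemma bounded_linear_funpow:
  fixes T :: "'a::real_normed_vector \<Rightarrow> 'a"
  assumes "bounded_linear T"
  shows "bounded_linear (T ^^ n)"
proof (induction n)
  case 0
  show ?case
    by (simp add: id_def)
next
  case (Suc n)
  show ?case
    using bounded_linear_compose[OF assms Suc] by (simp add: o_def)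
qed

lemma ess_norm_less_imp_finite_net:
  fixes S :: "'a::comm_cbanach_algebra_1 \<Rightarrow> 'a"
  assumes "bounded_linear S" "ess_norm S < r"
  obtains net where "finite net" "\<And>f. norm f \<le> 1 \<Longrightarrow> \<exists>y\<in>net. norm (S f - y) < 2 * r"
proof -
  have "{onorm (\<lambda>x. S x - K x) | K. compact_operator K} \<noteq> {}"
    using compact_operator_zero by blast
  then obtain K where K: "compact_operator K" and less: "onorm (\<lambda>x. S x - K x) < r"
    using cInf_lessD[OF _ assms(2)[unfolded ess_norm_def]] by blast
  have bl: "bounded_linear (\<lambda>x. S x - K x)"
    using assms(1) compact_operator_bounded_linear[OF K] by (rule bounded_linear_sub)
  have close: "norm (S f - K f) < r" if "norm f \<le> 1" for f
  proof -
    have "norm (S f - K f) \<le> onorm (\<lambda>x. S x - K x) * norm f"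
      using onorm[OF bl] by simp
    also have "\<dots> \<le> onorm (\<lambda>x. S x - K x)"
      using that onorm_pos_le[OF bl] by (simp add: mult_left_le)
    finally show ?thesis
      using less by simp
  qed
  have "compact (closure (K ` cball 0 1))"
    using K by (simp add: compact_operator_def)
  then have "\<forall>e>0. \<exists>net. finite net \<and> closure (K ` cball 0 1) \<subseteq> (\<Union>y\<in>net. ball y e)"
    by (simp add: compact_eq_totally_bounded)
  moreover have "0 < r"
    using less onorm_pos_le[OF bl] by linarith
  ultimately obtain net where "finite net" and cover: "closure (K ` cball 0 1) \<subseteq> (\<Union>y\<in>net. ball y r)"
    by blast
  show thesis
  proof (rule that[OF \<open>finite net\<close>])
    fix f :: 'a assume "norm f \<le> 1"
    then have "K f \<in> closure (K ` cball 0 1)"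
      by (intro subsetD[OF closure_subset] imageI) simp
    with cover obtain y where "y \<in> net" "K f \<in> ball y r"
      by blast
    then have "norm (K f - y) < r"
      by (simp add: dist_norm norm_minus_commute)
    moreover have "norm (S f - y) \<le> norm (S f - K f) + norm (K f - y)"
      using norm_triangle_ineq[of "S f - K f" "K f - y"] by simp
    ultimately have "norm (S f - y) < 2 * r"
      using close[OF \<open>norm f \<le> 1\<close>] by linarith
    with \<open>y \<in> net\<close> show "\<exists>y\<in>net. norm (S f - y) < 2 * r"
      by blast
  qed
qed

lemma riesz_operator_ess_norm_funpow_less:
  fixes T :: "'a::comm_cbanach_algebra_1 \<Rightarrow> 'a"
  assumes "riesz_operator T" "0 < r"
  obtains m where "ess_norm (T ^^ m) < r"
proof -
  have "(\<lambda>n. root n (ess_norm (T ^^ n))) \<longlonglongrightarrow> 0"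
    using assms(1) by (simp add: riesz_operator_def)
  moreover have "0 < min r 1"
    using assms(2) by simp
  ultimately have "eventually (\<lambda>n. root n (ess_norm (T ^^ n)) < min r 1) sequentially"
    by (rule order_tendstoD(2))
  then obtain N where N: "\<And>n. n \<ge> N \<Longrightarrow> root n (ess_norm (T ^^ n)) < min r 1"
    unfolding eventually_sequentially by blast
  have "0 < Suc N" and "root (Suc N) (ess_norm (T ^^ Suc N)) < min r 1"
    by (simp, rule N) simp
  then obtain m where "0 < m" and "root m (ess_norm (T ^^ m)) < min r 1"
    by blast
  then have "root m (ess_norm (T ^^ m)) < root m (min r 1 ^ m)"
    using \<open>0 < min r 1\<close> by (simp add: real_root_power_cancel)
  then have "ess_norm (T ^^ m) < min r 1 ^ m"
    using \<open>0 < m\<close> by simp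
  also have "\<dots> \<le> min r 1 ^ 1"
    using \<open>0 < m\<close> \<open>0 < min r 1\<close> by (intro power_decreasing) auto
  finally have "ess_norm (T ^^ m) < r"
    by simp
  then show thesis
    by (rule that)
qed

section \<open>Determinants of pairings\<close>

definition pairing_det :: "nat \<Rightarrow> (nat \<Rightarrow> 'b \<Rightarrow> 'c::comm_ring_1) \<Rightarrow> (nat \<Rightarrow> 'b) \<Rightarrow> 'c" where
  "pairing_det N k g = (\<Sum>\<sigma> | \<sigma> permutes {..<N}. of_int (sign \<sigma>) * (\<Prod>j<N. k (\<sigma> j) (g j)))"

lemma permutes_lessThan_less: "\<sigma> permutes {..<N} \<Longrightarrow> j < N \<Longrightarrow> \<sigma> j < N"
  using permutes_in_image[of \<sigma> "{..<N}" j] by simp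

lemma pairing_det_cong:
  assumes "\<And>i j. i < N \<Longrightarrow> j < N \<Longrightarrow> k i (g j) = k' i (g' j)"
  shows "pairing_det N k g = pairing_det N k' g'"
  unfolding pairing_det_def
proof (rule sum.cong)
  fix \<sigma> assume "\<sigma> \<in> {\<sigma>. \<sigma> permutes {..<N}}"
  then have "(\<Prod>j<N. k (\<sigma> j) (g j)) = (\<Prod>j<N. k' (\<sigma> j) (g' j))"
    using assms by (intro prod.cong) (simp_all add: permutes_lessThan_less)
  then show "of_int (sign \<sigma>) * (\<Prod>j<N. k (\<sigma> j) (g j)) = of_int (sign \<sigma>) * (\<Prod>j<N. k' (\<sigma> j) (g' j))"
    by simp
qed simp

lemma pairing_det_scale:
  assumes "\<And>i j. i < N \<Longrightarrow> j < N \<Longrightarrow> k i (g j) = c j * k i (u j)"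
  shows "pairing_det N k g = (\<Prod>j<N. c j) * pairing_det N k u"
proof -
  have "(\<Prod>j<N. k (\<sigma> j) (g j)) = (\<Prod>j<N. c j) * (\<Prod>j<N. k (\<sigma> j) (u j))"
    if "\<sigma> permutes {..<N}" for \<sigma>
    using assms that by (simp add: permutes_lessThan_less prod.distrib[symmetric])
  then show ?thesis
    unfolding pairing_det_def sum_distrib_left by (intro sum.cong) (simp_all add: ac_simps)
qed

lemma pairing_det_split:
  assumes "\<And>i j. i < N \<Longrightarrow> j < N \<Longrightarrow> k i (g j) = k i (u j) + k i (v j)"
  shows "pairing_det N k g = (\<Sum>A\<in>Pow {..<N}. pairing_det N k (\<lambda>j. if j \<in> A then u j else v j))"
proof -
  have "(\<Prod>j<N. k (\<sigma> j) (g j)) = (\<Sum>A\<in>Pow {..<N}. \<Prod>j<N. k (\<sigma> j) (if j \<in> A then u j else v j))"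
    if "\<sigma> permutes {..<N}" for \<sigma>
  proof -
    have "(\<Prod>j<N. k (\<sigma> j) (g j)) = (\<Prod>j<N. k (\<sigma> j) (u j) + k (\<sigma> j) (v j))"
      using assms that by (simp add: permutes_lessThan_less)
    also have "\<dots> = (\<Sum>A\<in>Pow {..<N}. (\<Prod>j\<in>A. k (\<sigma> j) (u j)) * (\<Prod>j\<in>{..<N} - A. k (\<sigma> j) (v j)))"
      by (rule prod_add) simp
    also have "\<dots> = (\<Sum>A\<in>Pow {..<N}. \<Prod>j<N. k (\<sigma> j) (if j \<in> A then u j else v j))"
    proof (rule sum.cong)
      fix A assume "A \<in> Pow {..<N}"
      then have "{..<N} \<inter> {j. j \<in> A} = A" "{..<N} \<inter> - {j. j \<in> A} = {..<N} - A"
        by auto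
      then show "(\<Prod>j\<in>A. k (\<sigma> j) (u j)) * (\<Prod>j\<in>{..<N} - A. k (\<sigma> j) (v j)) =
          (\<Prod>j<N. k (\<sigma> j) (if j \<in> A then u j else v j))"
        by (simp add: if_distrib prod.If_cases)
    qed simp
    finally show ?thesis .
  qed
  then have "pairing_det N k g = (\<Sum>\<sigma> | \<sigma> permutes {..<N}. \<Sum>A\<in>Pow {..<N}.
      of_int (sign \<sigma>) * (\<Prod>j<N. k (\<sigma> j) (if j \<in> A then u j else v j)))"
    unfolding pairing_det_def by (intro sum.cong) (simp_all add: sum_distrib_left)
  also have "\<dots> = (\<Sum>A\<in>Pow {..<N}. pairing_det N k (\<lambda>j. if j \<in> A then u j else v j))"
    unfolding pairing_det_def by (rule sum.swap)
  finally show ?thesis .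
qed

text \<open>Composing with the transposition of the two equal columns is a sign-reversing involution
  on the terms.\<close>

lemma pairing_det_eq_0_if_equal_columns:
  fixes k :: "nat \<Rightarrow> 'b \<Rightarrow> 'c::{idom, ring_char_0}"
  assumes "a < N" "b < N" "a \<noteq> b" and "g a = g b"
  shows "pairing_det N k g = 0"
proof -
  define \<tau> where "\<tau> = Transposition.transpose a b"
  have \<tau>: "\<tau> permutes {..<N}"
    unfolding \<tau>_def using assms by (intro permutes_swap_id) auto
  define summand where "summand \<sigma> = of_int (sign \<sigma>) * (\<Prod>j<N. k (\<sigma> j) (g j))" for \<sigma>
  have summand_swap: "summand (\<sigma> \<circ> \<tau>) = - summand \<sigma>" if "\<sigma> permutes {..<N}" for \<sigma>
  proof -
    have "permutation \<sigma>" "permutation \<tau>"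
      using that \<tau> by (auto simp: permutation_permutes)
    then have "sign (\<sigma> \<circ> \<tau>) = - sign \<sigma>"
      using \<open>a \<noteq> b\<close> by (simp add: sign_compose \<tau>_def sign_swap_id)
    moreover have "(\<Prod>j<N. k (\<sigma> (\<tau> j)) (g j)) = (\<Prod>j<N. k (\<sigma> j) (g j))"
    proof -
      have "g (\<tau> j) = g j" for j
        unfolding \<tau>_def using \<open>g a = g b\<close> by (cases "j = a"; cases "j = b") auto
      then have "(\<Prod>j<N. k (\<sigma> (\<tau> j)) (g j)) = (\<Prod>j\<in>\<tau> ` {..<N}. k (\<sigma> j) (g j))"
        using permutes_inj_on[OF \<tau>] by (simp add: prod.reindex)
      then show ?thesis
        by (simp add: permutes_image[OF \<tau>])
    qed
    ultimately show ?thesis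
      by (simp add: summand_def)
  qed
  have "pairing_det N k g = (\<Sum>\<sigma> | \<sigma> permutes {..<N}. summand (\<sigma> \<circ> \<tau>))"
    unfolding pairing_det_def summand_def[abs_def]
    by (rule sum.reindex_bij_witness[where i = "\<lambda>\<sigma>. \<sigma> \<circ> \<tau>" and j = "\<lambda>\<sigma>. \<sigma> \<circ> \<tau>"])
      (simp_all add: \<tau>_def comp_assoc permutes_compose[OF \<tau>[unfolded \<tau>_def]])
  also have "\<dots> = - pairing_det N k g"
    unfolding pairing_det_def summand_def[symmetric] using summand_swap by (simp add: sum_negf)
  finally show ?thesis
    by simp
qed

lemma norm_pairing_det_le_fact:
  fixes k :: "nat \<Rightarrow> 'b \<Rightarrow> 'c::real_normed_field"
  assumes "\<And>i j. i < N \<Longrightarrow> j < N \<Longrightarrow> norm (k i (g j)) \<le> 1"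
  shows "norm (pairing_det N k g) \<le> fact N"
proof -
  have "norm (pairing_det N k g) \<le> (\<Sum>\<sigma> | \<sigma> permutes {..<N}. norm (of_int (sign \<sigma>) * (\<Prod>j<N. k (\<sigma> j) (g j))))"
    unfolding pairing_det_def by (rule norm_sum)
  also have "\<dots> \<le> (\<Sum>\<sigma> | \<sigma> permutes {..<N}. 1)"
  proof (rule sum_mono)
    fix \<sigma> assume "\<sigma> \<in> {\<sigma>. \<sigma> permutes {..<N}}"
    then have "(\<Prod>j<N. norm (k (\<sigma> j) (g j))) \<le> 1"
      using assms by (intro prod_le_1) (simp_all add: permutes_lessThan_less)
    then show "norm (of_int (sign \<sigma>) * (\<Prod>j<N. k (\<sigma> j) (g j))) \<le> 1"
      by (simp add: norm_mult prod_norm sign_def)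
  qed
  also have "\<dots> = fact N"
    using card_permutations[of "{..<N}" N] by simp
  finally show ?thesis .
qed

lemma pairing_det_kronecker:
  assumes "\<And>i j. i < N \<Longrightarrow> j < N \<Longrightarrow> k i (g j) = (if i = j then 1 else 0)"
  shows "pairing_det N k g = 1"
proof -
  have "(\<Prod>j<N. k (\<sigma> j) (g j)) = 0" if "\<sigma> permutes {..<N}" "\<sigma> \<noteq> id" for \<sigma>
  proof -
    obtain j where "\<sigma> j \<noteq> j"
      using \<open>\<sigma> \<noteq> id\<close> by (auto simp: fun_eq_iff)
    then have "j < N"
      using permutes_not_in[OF that(1)] by fastforce
    with \<open>\<sigma> j \<noteq> j\<close> have "k (\<sigma> j) (g j) = 0"
      using assms permutes_lessThan_less[OF that(1)] by simp
    with \<open>j < N\<close> show ?thesis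
      by (intro prod_zero) auto
  qed
  then have "pairing_det N k g = (\<Sum>\<sigma> | \<sigma> permutes {..<N}. if \<sigma> = id then 1 else 0)"
    unfolding pairing_det_def using assms by (intro sum.cong) auto
  also have "\<dots> = 1"
    by (simp add: finite_permutations permutes_id)
  finally show ?thesis .
qed

section \<open>Finiteness of adjoint-invariant sets of characters\<close>

lemma prod_weight_le:
  fixes A :: real
  assumes "B \<subseteq> {..<N}" "card B \<le> d" "1 \<le> A"
  shows "(\<Prod>j<N. if j \<in> B then A else 1/4) \<le> (4 * A) ^ d / 4 ^ N"
proof -
  have "finite B" "card B \<le> N"
    using assms(1) by (auto intro: finite_subset dest: card_mono[rotated])
  have "(\<Prod>j<N. if j \<in> B then A else 1/4) = A ^ card B * (1/4) ^ (N - card B)"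
    using assms(1) \<open>finite B\<close>
    by (simp add: prod.If_cases Int_absorb1 card_Diff_subset flip: Diff_eq)
  also have "\<dots> = (4 * A) ^ card B / 4 ^ N"
    using \<open>card B \<le> N\<close> by (simp add: power_mult_distrib power_one_over field_simps flip: power_add)
  also have "\<dots> \<le> (4 * A) ^ d / 4 ^ N"
    using assms(2,3) by (intro divide_right_mono power_increasing) auto
  finally show ?thesis .
qed

context
  fixes S :: "'a::comm_cbanach_algebra_1 \<Rightarrow> 'a" and K :: "('a \<Rightarrow> complex) set" and net :: "'a set"
  assumes K_characters: "K \<subseteq> max_ideal_space"
    and K_lift: "\<And>k. k \<in> K \<Longrightarrow> \<exists>k'\<in>K. \<forall>f. k f = k' (S f)"
    and finite_net: "finite net"
    and net_approx: "\<And>f. norm f \<le> 1 \<Longrightarrow> \<exists>y\<in>net. norm (S f - y) \<le> 1/4"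
begin

lemma character_of_mem: "k \<in> K \<Longrightarrow> character k"
  using K_characters by (auto simp: max_ideal_space_def)

lemma norm_pairing_det_mixed_le:
  assumes k: "\<And>i. i < N \<Longrightarrow> k i \<in> K"
    and y: "\<And>j. j < N \<Longrightarrow> y j \<in> net" and h: "\<And>j. j < N \<Longrightarrow> norm (h j) \<le> 1/4"
    and "B \<subseteq> {..<N}"
    and A: "1 \<le> A" "\<And>x. x \<in> net \<Longrightarrow> norm x \<le> A"
    and D: "0 \<le> D" "\<And>k u. (\<And>i. i < N \<Longrightarrow> k i \<in> K) \<Longrightarrow> (\<And>j. j < N \<Longrightarrow> norm (u j) \<le> 1) \<Longrightarrow>
      norm (pairing_det N k u) \<le> D"
  shows "norm (pairing_det N k (\<lambda>j. if j \<in> B then y j else h j)) \<le> (4 * A) ^ card net / 4 ^ N * D"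
proof (cases "card net < card B")
  case True
  have "y ` B \<subseteq> net"
    using y \<open>B \<subseteq> {..<N}\<close> by blast
  then have "\<not> inj_on y B"
    using True card_inj_on_le[of y B net] finite_net by fastforce
  then obtain a b where "a \<in> B" "b \<in> B" "a \<noteq> b" "y a = y b"
    unfolding inj_on_def by blast
  with \<open>B \<subseteq> {..<N}\<close> have "pairing_det N k (\<lambda>j. if j \<in> B then y j else h j) = 0"
    by (intro pairing_det_eq_0_if_equal_columns[of a N b]) auto
  with A D show ?thesis
    by simp
next
  case False
  define w where "w j = (if j \<in> B then A else 1/4)" for j
  define u where "u j = (if j \<in> B then scaleC (1 / of_real A) (y j) else scaleC 4 (h j))" for j
  have split: "pairing_det N k (\<lambda>j. if j \<in> B then y j else h j) =
      (\<Prod>j<N. of_real (w j)) * pairing_det N k u"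
    using A k by (intro pairing_det_scale) (simp add: w_def u_def character_scaleC character_of_mem)
  have det_u: "norm (pairing_det N k u) \<le> D"
  proof (rule D(2)[OF k])
    fix j assume "j < N"
    then show "norm (u j) \<le> 1"
      using A(1) A(2)[OF y[OF \<open>j < N\<close>]] h[OF \<open>j < N\<close>]
      by (simp add: u_def norm_scaleC norm_divide divide_le_eq_1)
  qed
  have "norm (\<Prod>j<N. complex_of_real (w j)) = (\<Prod>j<N. w j)"
    unfolding prod_norm[symmetric] norm_of_real using A(1) by (intro prod.cong) (auto simp: w_def)
  also have "\<dots> \<le> (4 * A) ^ card net / 4 ^ N"
    unfolding w_def using \<open>B \<subseteq> {..<N}\<close> False A(1) by (intro prod_weight_le) auto
  finally have coefficient: "norm (\<Prod>j<N. complex_of_real (w j)) \<le> (4 * A) ^ card net / 4 ^ N" .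
  show ?thesis
    unfolding split norm_mult by (rule mult_mono[OF coefficient det_u]) (use A(1) in simp_all)
qed

lemma norm_pairing_det_contract:
  assumes A: "1 \<le> A" "\<And>x. x \<in> net \<Longrightarrow> norm x \<le> A"
    and D: "0 \<le> D" "\<And>k u. (\<And>i. i < N \<Longrightarrow> k i \<in> K) \<Longrightarrow> (\<And>j. j < N \<Longrightarrow> norm (u j) \<le> 1) \<Longrightarrow>
      norm (pairing_det N k u) \<le> D"
    and k: "\<And>i. i < N \<Longrightarrow> k i \<in> K" and g: "\<And>j. j < N \<Longrightarrow> norm (g j) \<le> 1"
  shows "norm (pairing_det N k g) \<le> (4 * A) ^ card net / 2 ^ N * D"
proof -
  have "\<forall>i. \<exists>k'. i < N \<longrightarrow> k' \<in> K \<and> (\<forall>f. k i f = k' (S f))"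
    using K_lift k by blast
  then obtain k' where k': "\<And>i. i < N \<Longrightarrow> k' i \<in> K" "\<And>i f. i < N \<Longrightarrow> k i f = k' i (S f)"
    by metis
  have "\<forall>j. \<exists>y. j < N \<longrightarrow> y \<in> net \<and> norm (S (g j) - y) \<le> 1/4"
    using net_approx g by blast
  then obtain y where y: "\<And>j. j < N \<Longrightarrow> y j \<in> net" "\<And>j. j < N \<Longrightarrow> norm (S (g j) - y j) \<le> 1/4"
    by metis
  define h where "h j = S (g j) - y j" for j
  have "pairing_det N k g = pairing_det N k' (\<lambda>j. S (g j))"
    using k'(2) by (rule pairing_det_cong)
  also have "\<dots> = (\<Sum>B\<in>Pow {..<N}. pairing_det N k' (\<lambda>j. if j \<in> B then y j else h j))"
  proof (rule pairing_det_split)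
    fix i j assume "i < N"
    then have "character (k' i)"
      using k'(1) character_of_mem by blast
    then show "k' i (S (g j)) = k' i (y j) + k' i (h j)"
      by (simp add: h_def flip: character_add)
  qed
  finally have "norm (pairing_det N k g)
      \<le> (\<Sum>B\<in>Pow {..<N}. norm (pairing_det N k' (\<lambda>j. if j \<in> B then y j else h j)))"
    by (simp add: norm_sum)
  also have "\<dots> \<le> (\<Sum>B\<in>Pow {..<N}. (4 * A) ^ card net / 4 ^ N * D)"
  proof (rule sum_mono)
    fix B assume "B \<in> Pow {..<N}"
    show "norm (pairing_det N k' (\<lambda>j. if j \<in> B then y j else h j)) \<le> (4 * A) ^ card net / 4 ^ N * D"
    proof (rule norm_pairing_det_mixed_le[OF k'(1) y(1) _ _ A D])
      show "norm (h j) \<le> 1/4" if "j < N" for j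
        using y(2)[OF that] by (simp only: h_def)
    qed (use \<open>B \<in> Pow {..<N}\<close> in auto)
  qed
  also have "\<dots> = 2 ^ N * ((4 * A) ^ card net / 4 ^ N * D)"
    by (simp add: card_Pow)
  also have "\<dots> = (4 * A) ^ card net / 2 ^ N * D"
  proof -
    have "(4::real) ^ N = 2 ^ N * 2 ^ N"
      using power_mult_distrib[of "2::real" 2 N] by simp
    then show ?thesis
      by simp
  qed
  finally show ?thesis .
qed

lemma norm_pairing_det_le_power:
  assumes A: "1 \<le> A" "\<And>x. x \<in> net \<Longrightarrow> norm x \<le> A"
    and "\<And>i. i < N \<Longrightarrow> k i \<in> K" "\<And>j. j < N \<Longrightarrow> norm (g j) \<le> 1"
  shows "norm (pairing_det N k g) \<le> ((4 * A) ^ card net / 2 ^ N) ^ r * fact N"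
  using assms(3,4)
proof (induction r arbitrary: k g)
  case 0
  have "norm (k i (g j)) \<le> 1" if "i < N" "j < N" for i j
    using norm_character_le[OF character_of_mem[OF 0(1)[OF that(1)]], of "g j"] 0(2)[OF that(2)]
    by linarith
  then show ?case
    by (simp add: norm_pairing_det_le_fact)
next
  case (Suc r)
  have "norm (pairing_det N k g)
      \<le> (4 * A) ^ card net / 2 ^ N * (((4 * A) ^ card net / 2 ^ N) ^ r * fact N)"
    using A Suc by (intro norm_pairing_det_contract) simp_all
  then show ?case
    by (simp only: power_Suc mult.assoc)
qed

lemma pairing_det_eventually_zero:
  obtains N where "\<And>k g. (\<And>i. i < N \<Longrightarrow> k i \<in> K) \<Longrightarrow> (\<And>j. j < N \<Longrightarrow> norm (g j) \<le> 1) \<Longrightarrow>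
    pairing_det N k g = 0"
proof -
  define A where "A = 1 + (\<Sum>x\<in>net. norm x)"
  have "norm x \<le> (\<Sum>x\<in>net. norm x)" if "x \<in> net" for x
    using finite_net that by (intro member_le_sum) auto
  moreover have "0 \<le> (\<Sum>x\<in>net. norm x)"
    by (simp add: sum_nonneg)
  ultimately have A: "1 \<le> A" "\<And>x. x \<in> net \<Longrightarrow> norm x \<le> A"
    unfolding A_def by fastforce+
  obtain N where N: "(4 * A) ^ card net < 2 ^ N"
    using real_arch_pow[of 2] by auto
  show thesis
  proof (rule that, rule ccontr)
    fix k g assume k: "\<And>i. i < N \<Longrightarrow> k i \<in> K" and g: "\<And>j. j < N \<Longrightarrow> norm (g j) \<le> 1"
      and "pairing_det N k g \<noteq> 0"
    then have "0 < norm (pairing_det N k g) / fact N"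
      by simp
    moreover have "(4 * A) ^ card net / 2 ^ N < 1"
      using N by simp
    ultimately obtain r where "((4 * A) ^ card net / 2 ^ N) ^ r < norm (pairing_det N k g) / fact N"
      using real_arch_pow_inv by blast
    then have "((4 * A) ^ card net / 2 ^ N) ^ r * fact N < norm (pairing_det N k g)"
      by (simp add: pos_less_divide_eq)
    with norm_pairing_det_le_power[OF A k g] show False
      by (meson not_le)
  qed
qed

lemma finite_adjoint_invariant_characters: "finite K"
proof (rule ccontr)
  assume "infinite K"
  obtain N where N: "\<And>k g. (\<And>i. i < N \<Longrightarrow> k i \<in> K) \<Longrightarrow> (\<And>j. j < N \<Longrightarrow> norm (g j) \<le> 1) \<Longrightarrow>
      pairing_det N k g = 0"
    using pairing_det_eventually_zero by blast
  obtain P where "finite P" "card P = N" "P \<subseteq> K"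
    using infinite_arbitrarily_large[OF \<open>infinite K\<close>] by blast
  then obtain k where k: "bij_betw k {..<N} P"
    using ex_bij_betw_nat_finite[of P] by (auto simp: atLeast0LessThan)
  then have kK: "k i \<in> K" if "i < N" for i
    using \<open>P \<subseteq> K\<close> that by (auto simp: bij_betw_def)
  have "inj_on k {..<N}" "\<And>i. i < N \<Longrightarrow> k i \<in> max_ideal_space"
    using k kK K_characters by (auto simp: bij_betw_def)
  then obtain e where e: "\<And>i j. i < N \<Longrightarrow> j < N \<Longrightarrow> k i (e j) = (if i = j then 1 else 0)"
    by (rule character_dual_family) auto
  define c where "c j = 1 / (norm (e j) + 1)" for j
  define g where "g j = scaleC (of_real (c j)) (e j)" for j
  have "0 < c j" for j
    by (simp add: c_def add_nonneg_pos)
  have "norm (g j) = norm (e j) / (norm (e j) + 1)" for j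
    using \<open>0 < c j\<close> by (simp only: g_def norm_scaleC norm_of_real) (simp add: c_def)
  then have "norm (g j) \<le> 1" for j
    by (simp add: divide_le_eq_1 add_nonneg_pos)
  then have "pairing_det N k g = 0"
    using N kK by blast
  moreover have "pairing_det N k g = (\<Prod>j<N. of_real (c j)) * pairing_det N k e"
    using kK by (intro pairing_det_scale) (simp add: g_def character_scaleC character_of_mem)
  moreover have "pairing_det N k e = 1"
    using e by (rule pairing_det_kronecker)
  moreover have "(\<Prod>j<N. of_real (c j) :: complex) \<noteq> 0"
    using \<open>\<And>j. 0 < c j\<close> by (simp add: less_imp_neq[symmetric])
  ultimately show False
    by simp
qed

end

lemma induced_by_funpow:
  assumes "induced_by T \<phi>" "x \<in> max_ideal_space"
  shows "x ((T ^^ n) f) = ((\<phi> ^^ n) x) f"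
  using assms(2)
proof (induction n arbitrary: x)
  case (Suc n)
  have "x ((T ^^ Suc n) f) = \<phi> x ((T ^^ n) f)"
    using assms(1) Suc.prems by (simp add: induced_by_def)
  also have "\<dots> = (\<phi> ^^ n) (\<phi> x) f"
    using assms(1) Suc.prems unfolding induced_by_def by (intro Suc.IH) blast
  also have "\<dots> = (\<phi> ^^ Suc n) x f"
    by (simp add: funpow_swap1)
  finally show ?case .
qed simp

lemma finite_eventual_image_if_riesz:
  fixes T :: "'a::comm_cbanach_algebra_1 \<Rightarrow> 'a"
  assumes "riesz_operator T" "induced_by T \<phi>"
  shows "finite (eventual_image \<phi> max_ideal_space)"
proof -
  let ?X = "max_ideal_space :: ('a \<Rightarrow> complex) set"
  have "continuous_on ?X \<phi>" "\<phi> ` ?X \<subseteq> ?X"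
    using assms(2) by (simp_all add: induced_by_def)
  note dynamics = Hausdorff_space_euclidean_fun compact_max_ideal_space this
  have "(0::real) < 1/8"
    by simp
  then obtain m where m: "ess_norm (T ^^ m) < 1/8"
    by (rule riesz_operator_ess_norm_funpow_less[OF assms(1)])
  have "bounded_linear (T ^^ m)"
    using assms(1) by (simp add: bounded_linear_funpow riesz_operator_def bounded_operator_def)
  then obtain net where "finite net"
    and net: "\<And>f. norm f \<le> 1 \<Longrightarrow> \<exists>y\<in>net. norm ((T ^^ m) f - y) < 2 * (1/8)"
    by (rule ess_norm_less_imp_finite_net[OF _ m]) auto
  have "\<exists>k'\<in>eventual_image \<phi> ?X. \<forall>f. k f = k' ((T ^^ m) f)" if "k \<in> eventual_image \<phi> ?X" for k
  proof -
    have "k \<in> (\<phi> ^^ m) ` eventual_image \<phi> ?X"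
      using that by (simp only: funpow_image_eventual_image[OF dynamics])
    then obtain k' where "k = (\<phi> ^^ m) k'" "k' \<in> eventual_image \<phi> ?X"
      by (rule imageE)
    moreover have "k' \<in> ?X"
      using eventual_image_subset[of \<phi> ?X] \<open>k' \<in> eventual_image \<phi> ?X\<close> by (rule subsetD)
    ultimately show ?thesis
      using induced_by_funpow[OF assms(2)] by auto
  qed
  with \<open>finite net\<close> net show ?thesis
    using eventual_image_subset[of \<phi> ?X]
    by (intro finite_adjoint_invariant_characters[of _ "T ^^ m" net]) force+
qed

theorem theorem1p1:
  fixes T :: "'a::comm_cbanach_algebra_1 \<Rightarrow> 'a"
    and \<phi> :: "('a \<Rightarrow> complex) \<Rightarrow> ('a \<Rightarrow> complex)"
  assumes "semisimple TYPE('a)"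
    and "connected (max_ideal_space :: ('a \<Rightarrow> complex) set)"
    and "unital_endomorphism T"
    and "riesz_operator T"
    and "induced_by T \<phi>"
  shows "\<exists>x0\<in>max_ideal_space.
           (\<Inter>n. (\<phi> ^^ n) ` max_ideal_space) = {x0} \<and> \<phi> x0 = x0 \<and>
           (\<forall>x\<in>max_ideal_space. \<phi> x = x \<longrightarrow> x = x0)"
proof -
  txt \<open>Multiplicativity of \<open>T\<close> enters only through \<open>induced_by T \<phi>\<close>.\<close>
  let ?X = "max_ideal_space :: ('a \<Rightarrow> complex) set"
  have "continuous_on ?X \<phi>" "\<phi> ` ?X \<subseteq> ?X"
    using assms(5) by (simp_all add: induced_by_def)
  note dynamics = Hausdorff_space_euclidean_fun compact_max_ideal_space this
  have "finite (eventual_image \<phi> ?X)"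
    using assms(4,5) by (rule finite_eventual_image_if_riesz)
  moreover have "connected (eventual_image \<phi> ?X)" "eventual_image \<phi> ?X \<noteq> {}"
    using connected_eventual_image[OF dynamics assms(2)]
      eventual_image_nonempty[OF dynamics max_ideal_space_nonempty[OF assms(1)]] .
  ultimately obtain x0 where x0: "eventual_image \<phi> ?X = {x0}"
    using connected_finite_imp_sing[OF Hausdorff_space_euclidean_fun] by blast
  then have "(\<Inter>n. (\<phi> ^^ n) ` ?X) = {x0}"
    by (simp only: eventual_image_def)
  with eventual_image_singleton_fixed_point[OF dynamics x0] show ?thesis
    by blast
qed

end
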